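(* Let $n\ge p\ge1$, $0<\varepsilon<1$, $\lambda>0$, $\tilde a>0$. Define $$K(\lambda,\varepsilon,a,d)=\frac{\lambda(1-\varepsilon)d+a\sqrt{(\varepsilon-d)/2}}{a^2+\lambda^2(1+\varepsilon)d^2},\qquad Q(\lambda,\varepsilon,\tilde a)=\inf_{a\in(0,\tilde a],\,d\in(0,\varepsilon]}K(\lambda,\varepsilon,a,d),$$ and $\eta^*(\tilde a,\varepsilon,\lambda)=\min\{Q(\lambda,\varepsilon,\tilde a),\frac1{2\lambda}\}$. Then $\eta^*(\tilde a,\varepsilon,\lambda)>0$, and for every $X\in\mathbb{R}^{n\times p}$ with $\|X^\top X-I_p\|\le\varepsilon$ and every skew-symmetric $A\in\mathbb{R}^{n\times n}$ with $\|AX\|\le\tilde a$, the quantity $$\eta(X)=\min\left\{\frac{\lambda d(1-d)+\sqrt{\lambda^2d^2(1-d)^2+g^2(\varepsilon-d)}}{g^2},\ \frac{1}{2\lambda}\right\},$$ where $g=\|AX+\lambda X(X^\top X-I_p)\|$ and $d=\|X^\top X-I_p\|$ (first term interpreted as $+\infty$ when $g=0$), satisfies $\eta(X)\ge\eta^*(\tilde a,\varepsilon,\lambda)$.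
   Context: $\|\cdot\|$ denotes the Frobenius norm. $\eta(X)$ is the safeguard step size guaranteeing that $X-\eta(AX+\lambda X(X^\top X-I_p))$ stays in $\{\|Y^\top Y-I_p\|\le\varepsilon\}$ for all $\eta\le\eta(X)$. *)

theory Defs
  imports "HOL-Analysis.Analysis"
begin

text \<open>Matrices are rendered as real^'p^'n (n rows, p columns). The library norm on
  this type is the Euclidean norm of the vector of rows, i.e. the Frobenius norm.\<close>

definition frob :: "real^'c^'r \<Rightarrow> real" where
  "frob M = norm M"

definition Kfun :: "real \<Rightarrow> real \<Rightarrow> real \<Rightarrow> real \<Rightarrow> real" where
  "Kfun lam eps a d =
     (lam * (1 - eps) * d + a * sqrt ((eps - d) / 2)) / (a^2 + lam^2 * (1 + eps) * d^2)"

definition Qfun :: "real \<Rightarrow> real \<Rightarrow> real \<Rightarrow> real" where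
  "Qfun lam eps atil = Inf {Kfun lam eps a d | a d. 0 < a \<and> a \<le> atil \<and> 0 < d \<and> d \<le> eps}"

definition eta_star :: "real \<Rightarrow> real \<Rightarrow> real \<Rightarrow> real" where
  "eta_star atil eps lam = min (Qfun lam eps atil) (1 / (2 * lam))"

text \<open>Safeguard step size; the first term is +infinity when g = 0.\<close>
definition eta_safe :: "real \<Rightarrow> real \<Rightarrow> real^'n^'n \<Rightarrow> real^'p^'n \<Rightarrow> real" where
  "eta_safe lam eps A X =
    (let g = frob (A ** X + lam *\<^sub>R (X ** (transpose X ** X - mat 1)));
         d = frob (transpose X ** X - mat 1)
     in if g = 0 then 1 / (2 * lam)
        else min ((lam * d * (1 - d) + sqrt (lam^2 * d^2 * (1 - d)^2 + g^2 * (eps - d))) / g^2)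
                 (1 / (2 * lam)))"

end

theory Submission imports Defs begin

(* With S = X^T X - I, d = |S|, a = |AX| and g = |AX + lam X S|: since A is skew-symmetric and
   X S X^T symmetric, AX is orthogonal to X S, and |X S|^2 = <S, S^2 + S> <= d^2 + d^3, so
   g^2 <= a^2 + lam^2 (1 + eps) d^2 =: U.
   The first term of eta(X) is the positive root of g^2 t^2 = 2 lam d (1 - d) t + (eps - d), hence
   bounds every t with g^2 t^2 <= 2 lam d (1 - d) t + (eps - d). For K = N / U with numerator N,
   N^2 <= 2 lam d (1 - d) N + (eps - d) U makes t = K such a t; and Q <= K also where a = 0 or d = 0,
   by continuity of K.
   Q > 0 because for d <= eps/2 both the numerator and the denominator of K are comparable to a + d,
   while for d >= eps/2 the numerator is bounded below and the denominator above. *)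

lemma transpose_diff:
  fixes M N :: "'a::ab_group_add^'b^'c"
  shows "transpose (M - N) = transpose M - transpose N"
  by (simp add: transpose_def vec_eq_iff)

lemma matrix_add_rdistrib:
  fixes B C :: "'a::semiring_1^'b^'c" and M :: "'a^'d^'b"
  shows "(B + C) ** M = B ** M + C ** M"
  by (simp add: matrix_matrix_mult_def vec_eq_iff distrib_right sum.distrib)

lemma inner_transpose:
  fixes M N :: "real^'b^'c"
  shows "inner (transpose M) (transpose N) = inner M N"
  unfolding inner_vec_def transpose_def by (simp, rule sum.swap)

lemma inner_matrix_mult_left:
  fixes M :: "real^'b^'c" and N :: "real^'d^'b" and P :: "real^'d^'c"
  shows "inner (M ** N) P = inner N (transpose M ** P)"
proof -
  have "inner (M ** N) P = (\<Sum>i\<in>UNIV. \<Sum>j\<in>UNIV. \<Sum>k\<in>UNIV. M$i$k * N$k$j * P$i$j)"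
    by (simp add: inner_vec_def matrix_matrix_mult_def sum_distrib_right)
  also have "\<dots> = (\<Sum>i\<in>UNIV. \<Sum>k\<in>UNIV. \<Sum>j\<in>UNIV. M$i$k * N$k$j * P$i$j)"
    by (rule sum.cong, simp, rule sum.swap)
  also have "\<dots> = (\<Sum>k\<in>UNIV. \<Sum>i\<in>UNIV. \<Sum>j\<in>UNIV. M$i$k * N$k$j * P$i$j)"
    by (rule sum.swap)
  also have "\<dots> = (\<Sum>k\<in>UNIV. \<Sum>j\<in>UNIV. \<Sum>i\<in>UNIV. M$i$k * N$k$j * P$i$j)"
    by (rule sum.cong, simp, rule sum.swap)
  also have "\<dots> = inner N (transpose M ** P)"
    by (simp add: inner_vec_def matrix_matrix_mult_def transpose_def sum_distrib_left
        mult.commute mult.left_commute)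
  finally show ?thesis .
qed

lemma inner_matrix_mult_right:
  fixes M :: "real^'b^'c" and N :: "real^'d^'b" and P :: "real^'d^'c"
  shows "inner (M ** N) P = inner M (P ** transpose N)"
proof -
  have "inner (M ** N) P = inner (transpose N ** transpose M) (transpose P)"
    by (metis inner_transpose matrix_transpose_mul)
  also have "\<dots> = inner (transpose M) (N ** transpose P)"
    by (simp add: inner_matrix_mult_left)
  also have "\<dots> = inner M (transpose (N ** transpose P))"
    using inner_transpose[of M "transpose (N ** transpose P)"] by simp
  also have "\<dots> = inner M (P ** transpose N)"
    by (simp add: matrix_transpose_mul)
  finally show ?thesis .
qed

lemma norm_matrix_mult_le:
  fixes M :: "real^'b^'c" and N :: "real^'d^'b"
  shows "norm (M ** N) \<le> norm M * norm N"
proof -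
  have entry: "(M ** N)$i$j = inner (M$i) (column j N)" for i j
    by (simp add: matrix_matrix_mult_def inner_vec_def column_def)
  have "(norm (M ** N))^2 = (\<Sum>i\<in>UNIV. \<Sum>j\<in>UNIV. (inner (M$i) (column j N))^2)"
    unfolding power2_norm_eq_inner by (simp add: inner_vec_def entry power2_eq_square)
  also have "\<dots> \<le> (\<Sum>i\<in>UNIV. \<Sum>j\<in>UNIV. (norm (M$i))^2 * (norm (column j N))^2)"
    by (intro sum_mono) (metis Cauchy_Schwarz_ineq2 abs_le_square_iff abs_mult abs_norm_cancel
        power_mult_distrib)
  also have "\<dots> = (\<Sum>i\<in>UNIV. (norm (M$i))^2) * (\<Sum>j\<in>UNIV. (norm (column j N))^2)"
    by (simp add: sum_product)
  also have "(\<Sum>j\<in>UNIV. (norm (column j N))^2) = (norm N)^2"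
    unfolding power2_norm_eq_inner
    by (simp add: inner_vec_def column_def power2_eq_square, rule sum.swap)
  also have "(\<Sum>i\<in>UNIV. (norm (M$i))^2) = (norm M)^2"
    unfolding power2_norm_eq_inner by (simp add: inner_vec_def)
  finally have "(norm (M ** N))^2 \<le> (norm M * norm N)^2"
    by (simp add: power_mult_distrib)
  then show ?thesis
    by (simp add: power2_le_iff_abs_le)
qed

lemma inner_skew_symmetric_eq_0:
  fixes A C :: "real^'n^'n"
  assumes "transpose A = - A" and "transpose C = C"
  shows "inner A C = 0"
proof -
  have "inner A C = inner (transpose A) (transpose C)"
    by (simp add: inner_transpose)
  also have "\<dots> = - inner A C"
    by (simp add: assms)
  finally show ?thesis
    by simp
qed

lemma norm_mult_gram_deviation_sq_le:
  fixes X :: "real^'p^'n"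
  defines "S \<equiv> transpose X ** X - mat 1"
  shows "(norm (X ** S))^2 \<le> (norm S)^2 + (norm S)^3"
proof -
  have gram: "transpose X ** X = S + mat 1"
    by (simp add: S_def)
  have "(norm (X ** S))^2 = inner S (transpose X ** (X ** S))"
    by (simp add: power2_norm_eq_inner inner_matrix_mult_left)
  also have "transpose X ** (X ** S) = S ** S + S"
    by (simp add: matrix_mul_assoc gram matrix_add_rdistrib)
  also have "inner S (S ** S + S) = inner S (S ** S) + (norm S)^2"
    by (simp add: inner_add_right power2_norm_eq_inner)
  also have "inner S (S ** S) \<le> norm S * norm (S ** S)"
    using Cauchy_Schwarz_ineq2 abs_ge_self order_trans by blast
  also have "\<dots> \<le> norm S * (norm S * norm S)"
    by (intro mult_left_mono norm_matrix_mult_le) simp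
  finally show ?thesis
    by (simp add: power3_eq_cube power2_eq_square)
qed

lemma norm_skew_plus_penalty_sq_le:
  fixes A :: "real^'n^'n" and X :: "real^'p^'n"
  defines "S \<equiv> transpose X ** X - mat 1"
  assumes "transpose A = - A" and "norm S \<le> eps"
  shows "(norm (A ** X + lam *\<^sub>R (X ** S)))^2 \<le> (norm (A ** X))^2 + lam^2 * (1 + eps) * (norm S)^2"
proof -
  have "transpose S = S"
    by (simp add: S_def transpose_diff matrix_transpose_mul)
  then have "inner A ((X ** S) ** transpose X) = 0"
    by (intro inner_skew_symmetric_eq_0 assms)
      (simp add: matrix_transpose_mul matrix_mul_assoc)
  then have orthogonal: "inner (A ** X) (X ** S) = 0"
    by (simp add: inner_matrix_mult_right)
  have "(norm S)^3 \<le> eps * (norm S)^2"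
    using mult_right_mono[OF assms(3), of "(norm S)^2"]
    by (simp add: power3_eq_cube power2_eq_square mult.assoc)
  then have "(norm (X ** S))^2 \<le> (1 + eps) * (norm S)^2"
    using norm_mult_gram_deviation_sq_le[of X] by (simp add: S_def algebra_simps)
  then have "lam^2 * (norm (X ** S))^2 \<le> lam^2 * ((1 + eps) * (norm S)^2)"
    by (intro mult_left_mono) auto
  moreover have "(norm (A ** X + lam *\<^sub>R (X ** S)))^2 = (norm (A ** X))^2 + lam^2 * (norm (X ** S))^2"
    unfolding power2_norm_eq_inner
    by (simp add: inner_add_left inner_add_right orthogonal inner_commute power2_eq_square)
  ultimately show ?thesis
    by (simp add: mult.assoc)
qed

lemma le_quadratic_root:
  fixes g t b e :: real
  assumes "g > 0" and "g^2 * t^2 \<le> 2 * b * t + e"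
  shows "t \<le> (b + sqrt (b^2 + g^2 * e)) / g^2"
proof -
  have "g^2 * (g^2 * t^2) \<le> g^2 * (2 * b * t + e)"
    using assms by (intro mult_left_mono) auto
  moreover have "(g^2 * t - b)^2 = g^2 * (g^2 * t^2) - 2 * b * g^2 * t + b^2"
    by (simp add: power2_eq_square algebra_simps)
  ultimately have "(g^2 * t - b)^2 \<le> b^2 + g^2 * e"
    by (simp add: algebra_simps)
  then have "g^2 * t - b \<le> sqrt (b^2 + g^2 * e)"
    by (rule real_le_rsqrt)
  then show ?thesis
    using assms(1) by (simp add: pos_le_divide_eq algebra_simps)
qed

lemma Kfun_nonneg:
  assumes "eps < 1" and "0 < lam" and "0 \<le> a" and "0 \<le> d" and "d \<le> eps"
  shows "0 \<le> Kfun lam eps a d"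
  unfolding Kfun_def using assms
  by (intro divide_nonneg_nonneg add_nonneg_nonneg mult_nonneg_nonneg) auto

lemma Qfun_le_Kfun:
  assumes "eps < 1" and "0 < lam" and "0 < a" and "a \<le> atil" and "0 < d" and "d \<le> eps"
  shows "Qfun lam eps atil \<le> Kfun lam eps a d"
  unfolding Qfun_def
proof (rule cInf_lower)
  show "Kfun lam eps a d \<in> {Kfun lam eps a d |a d. 0 < a \<and> a \<le> atil \<and> 0 < d \<and> d \<le> eps}"
    using assms by blast
  show "bdd_below {Kfun lam eps a d |a d. 0 < a \<and> a \<le> atil \<and> 0 < d \<and> d \<le> eps}"
    using assms Kfun_nonneg by (intro bdd_belowI[of _ 0]) force
qed

lemma Qfun_le_Kfun_closure:
  assumes "0 < eps" and "eps < 1" and "0 < lam" and "0 < atil"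
    and "0 \<le> a" and "a \<le> atil" and "0 \<le> d" and "d \<le> eps"
    and "0 < a^2 + lam^2 * (1 + eps) * d^2"
  shows "Qfun lam eps atil \<le> Kfun lam eps a d"
proof -
  define mix where "mix s x y = (1 - s) * x + s * y" for s x y :: real
  have mix_bounds: "0 < mix s x y \<and> mix s x y \<le> y"
    if "0 < s" "s < 1" "0 \<le> x" "x \<le> y" "0 < y" for s x y
  proof -
    have "(1 - s) * x \<le> y - s * y"
      using that mult_left_mono[of x y "1 - s"] by (simp add: algebra_simps)
    moreover have "0 \<le> (1 - s) * x" and "0 < s * y"
      using that by auto
    ultimately show ?thesis
      unfolding mix_def by linarith
  qed
  have "((\<lambda>s. Kfun lam eps (mix s a atil) (mix s d eps)) \<longlongrightarrow> Kfun lam eps (mix 0 a atil) (mix 0 d eps))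
      (at_right 0)"
    unfolding Kfun_def mix_def using assms(9)
    by (intro tendsto_intros) auto
  moreover have "\<forall>\<^sub>F s in at_right 0. Qfun lam eps atil \<le> Kfun lam eps (mix s a atil) (mix s d eps)"
    using eventually_at_right_real[OF zero_less_one]
  proof eventually_elim
    case (elim s)
    then show ?case
      using assms mix_bounds[of s a atil] mix_bounds[of s d eps] by (intro Qfun_le_Kfun) auto
  qed
  ultimately show ?thesis
    by (intro tendsto_lowerbound) (auto simp: mix_def)
qed

lemma Kfun_ge_if_le_half:
  assumes "eps < 1" and "0 < lam" and "0 < a" and "a \<le> atil" and "0 < d" and "d \<le> eps / 2"
  shows "min (lam * (1 - eps)) (sqrt eps / 2) / (atil + lam^2 * (1 + eps) * eps) \<le> Kfun lam eps a d"
proof -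
  define c where "c = min (lam * (1 - eps)) (sqrt eps / 2)"
  define M where "M = atil + lam^2 * (1 + eps) * eps"
  define N where "N = lam * (1 - eps) * d + a * sqrt ((eps - d) / 2)"
  define D where "D = a^2 + lam^2 * (1 + eps) * d^2"
  have "sqrt eps / 2 \<le> sqrt ((eps - d) / 2)"
    using assms real_sqrt_le_mono[of "eps / 4" "(eps - d) / 2"] by (simp add: real_sqrt_divide)
  then have "c * a \<le> a * sqrt ((eps - d) / 2)"
    unfolding c_def using assms by (simp add: mult.commute mult_right_mono min.coboundedI2)
  moreover have "c * d \<le> lam * (1 - eps) * d"
    unfolding c_def using assms by (simp add: mult_right_mono)
  ultimately have "c * (a + d) \<le> N"
    unfolding N_def by (simp add: distrib_left)
  moreover have "D \<le> M * (a + d)"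
  proof -
    have "a^2 \<le> atil * a" and "lam^2 * (1 + eps) * d^2 \<le> lam^2 * (1 + eps) * eps * d"
      using assms by (simp_all add: power2_eq_square mult_right_mono mult_left_mono)
    moreover have "0 \<le> atil * d" and "0 \<le> a * (lam^2 * (1 + eps) * eps)"
      using assms by simp_all
    ultimately show ?thesis
      unfolding D_def M_def by (simp add: algebra_simps)
  qed
  moreover have "0 < D" and "0 \<le> N"
    unfolding D_def N_def using assms by (auto intro: add_pos_nonneg)
  ultimately have "c * (a + d) / (M * (a + d)) \<le> N / D"
    by (intro frac_le) auto
  then show ?thesis
    using assms unfolding c_def M_def Kfun_def N_def D_def by simp
qed

lemma Kfun_ge_if_ge_half:
  assumes "0 < eps" and "eps < 1" and "0 < lam" and "0 \<le> a" and "a \<le> atil"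
    and "eps / 2 \<le> d" and "d \<le> eps"
  shows "lam * (1 - eps) * eps / 2 / (atil^2 + lam^2 * (1 + eps) * eps^2) \<le> Kfun lam eps a d"
  unfolding Kfun_def
proof (rule frac_le)
  have "lam * (1 - eps) * (eps / 2) \<le> lam * (1 - eps) * d"
    using assms by (intro mult_left_mono) auto
  moreover have "0 \<le> lam * (1 - eps) * (eps / 2)" and "0 \<le> a * sqrt ((eps - d) / 2)"
    using assms by simp_all
  ultimately show "0 \<le> lam * (1 - eps) * d + a * sqrt ((eps - d) / 2)"
    and "lam * (1 - eps) * eps / 2 \<le> lam * (1 - eps) * d + a * sqrt ((eps - d) / 2)"
    by simp_all
  show "0 < a^2 + lam^2 * (1 + eps) * d^2"
    using assms by (intro add_nonneg_pos) auto
  show "a^2 + lam^2 * (1 + eps) * d^2 \<le> atil^2 + lam^2 * (1 + eps) * eps^2"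
    using assms by (intro add_mono mult_left_mono power_mono) auto
qed

lemma Qfun_pos:
  assumes "0 < eps" and "eps < 1" and "0 < lam" and "0 < atil"
  shows "0 < Qfun lam eps atil"
proof -
  define c where "c = min (min (lam * (1 - eps)) (sqrt eps / 2) / (atil + lam^2 * (1 + eps) * eps))
    (lam * (1 - eps) * eps / 2 / (atil^2 + lam^2 * (1 + eps) * eps^2))"
  have "c \<le> Kfun lam eps a d" if "0 < a" "a \<le> atil" "0 < d" "d \<le> eps" for a d
  proof (cases "d \<le> eps / 2")
    case True
    then show ?thesis
      unfolding c_def using that assms Kfun_ge_if_le_half[of eps lam a atil d] by linarith
  next
    case False
    then show ?thesis
      unfolding c_def using that assms Kfun_ge_if_ge_half[of eps lam a atil d] by linarith
  qed
  then have "c \<le> Qfun lam eps atil"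
    unfolding Qfun_def using assms by (intro cInf_greatest) auto
  moreover have "0 < c"
    unfolding c_def using assms by (auto intro!: add_pos_nonneg divide_pos_pos)
  ultimately show ?thesis
    by simp
qed

lemma Kfun_numerator_sq_le:
  assumes "eps < 1" and "0 < lam" and "0 \<le> a" and "0 \<le> d" and "d \<le> eps"
  defines "N \<equiv> lam * (1 - eps) * d + a * sqrt ((eps - d) / 2)"
  shows "N^2 \<le> 2 * (lam * d * (1 - d)) * N + (eps - d) * (a^2 + lam^2 * (1 + eps) * d^2)"
proof -
  define r where "r = lam * (1 - eps) * d"
  define s where "s = sqrt ((eps - d) / 2)"
  have N_eq: "N = r + a * s"
    unfolding N_def r_def s_def ..
  have "0 \<le> r" and "0 \<le> s" and s_sq: "2 * s^2 = eps - d"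
    unfolding r_def s_def using assms by simp_all
  have "lam * ((1 - eps) * d) \<le> lam * ((1 - d) * d)"
    using assms by (intro mult_left_mono mult_right_mono) auto
  then have "r \<le> lam * d * (1 - d)"
    unfolding r_def by (simp add: algebra_simps)
  moreover have "r \<le> N"
    using N_eq assms \<open>0 \<le> s\<close> by simp
  ultimately have "r * r \<le> (lam * d * (1 - d)) * N"
    using \<open>0 \<le> r\<close> by (intro mult_mono) auto
  then have "2 * r^2 \<le> 2 * (lam * d * (1 - d)) * N"
    by (simp add: power2_eq_square)
  moreover have "2 * (a * s)^2 \<le> (eps - d) * (a^2 + lam^2 * (1 + eps) * d^2)"
  proof -
    have "2 * (a * s)^2 = (eps - d) * a^2"
      unfolding s_sq[symmetric] by (simp add: power_mult_distrib)
    also have "\<dots> \<le> (eps - d) * (a^2 + lam^2 * (1 + eps) * d^2)"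
      using assms by (intro mult_left_mono) auto
    finally show ?thesis .
  qed
  moreover have "N^2 \<le> 2 * r^2 + 2 * (a * s)^2"
    using N_eq sum_squares_bound[of r "a * s"] by (simp add: algebra_simps power2_eq_square)
  ultimately show ?thesis
    by linarith
qed

lemma Qfun_le_safeguard_root:
  assumes "0 < eps" and "eps < 1" and "0 < lam" and "0 < atil"
    and "0 \<le> a" and "a \<le> atil" and "0 \<le> d" and "d \<le> eps" and "0 < g"
    and g_le: "g^2 \<le> a^2 + lam^2 * (1 + eps) * d^2"
  shows "Qfun lam eps atil \<le> (lam * d * (1 - d) + sqrt (lam^2 * d^2 * (1 - d)^2 + g^2 * (eps - d))) / g^2"
proof -
  define b where "b = lam * d * (1 - d)"
  define N where "N = lam * (1 - eps) * d + a * sqrt ((eps - d) / 2)"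
  define U where "U = a^2 + lam^2 * (1 + eps) * d^2"
  have "0 < U"
    using g_le \<open>0 < g\<close> unfolding U_def by (smt (verit) zero_less_power)
  have K_eq: "Kfun lam eps a d = N / U"
    unfolding Kfun_def N_def U_def ..
  have N_sq: "N^2 \<le> 2 * b * N + (eps - d) * U"
    unfolding b_def N_def U_def using assms by (intro Kfun_numerator_sq_le) auto
  have "g^2 * (N / U)^2 \<le> U * (N / U)^2"
    using g_le unfolding U_def by (intro mult_right_mono) auto
  also have "\<dots> = N^2 / U"
    using \<open>0 < U\<close> by (simp add: power2_eq_square)
  also have "\<dots> \<le> (2 * b * N + (eps - d) * U) / U"
    using N_sq \<open>0 < U\<close> by (intro divide_right_mono) auto
  also have "\<dots> = 2 * b * (N / U) + (eps - d)"
    using \<open>0 < U\<close> by (simp add: field_simps)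
  finally have "N / U \<le> (b + sqrt (b^2 + g^2 * (eps - d))) / g^2"
    by (rule le_quadratic_root[OF \<open>0 < g\<close>])
  moreover have "Qfun lam eps atil \<le> N / U"
    using Qfun_le_Kfun_closure[of eps lam atil a d] \<open>0 < U\<close> assms by (simp add: K_eq U_def)
  moreover have "lam^2 * d^2 * (1 - d)^2 = b^2"
    unfolding b_def by (simp add: power_mult_distrib)
  ultimately show ?thesis
    unfolding b_def[symmetric] by simp
qed

theorem lemma4:
  fixes lam eps atil :: real
  assumes "CARD('p::finite) \<le> CARD('n::finite)"
    and "0 < eps" and "eps < 1" and "0 < lam" and "0 < atil"
  shows "eta_star atil eps lam > 0 \<and>
    (\<forall>(X::real^'p^'n) (A::real^'n^'n).
       frob (transpose X ** X - mat 1) \<le> eps \<longrightarrow> transpose A = - A \<longrightarrow>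
       frob (A ** X) \<le> atil \<longrightarrow> eta_safe lam eps A X \<ge> eta_star atil eps lam)"
proof (intro conjI allI impI)
  show "eta_star atil eps lam > 0"
    unfolding eta_star_def using Qfun_pos[OF assms(2-5)] assms(4) by simp
next
  fix X :: "real^'p^'n" and A :: "real^'n^'n"
  assume d_le: "frob (transpose X ** X - mat 1) \<le> eps" and skew: "transpose A = - A"
    and a_le: "frob (A ** X) \<le> atil"
  define S where "S = transpose X ** X - mat 1"
  define g where "g = norm (A ** X + lam *\<^sub>R (X ** S))"
  have g_le: "g^2 \<le> (norm (A ** X))^2 + lam^2 * (1 + eps) * (norm S)^2"
    unfolding g_def S_def using d_le skew by (intro norm_skew_plus_penalty_sq_le) (simp_all add: frob_def)
  show "eta_safe lam eps A X \<ge> eta_star atil eps lam"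
  proof (cases "g = 0")
    case True
    then show ?thesis
      by (simp add: eta_safe_def eta_star_def frob_def g_def S_def)
  next
    case False
    define root where "root = (lam * norm S * (1 - norm S)
        + sqrt (lam^2 * (norm S)^2 * (1 - norm S)^2 + g^2 * (eps - norm S))) / g^2"
    have "0 < g"
      using False unfolding g_def by simp
    then have "Qfun lam eps atil \<le> root"
      unfolding root_def using assms d_le a_le g_le
      by (intro Qfun_le_safeguard_root) (auto simp: frob_def S_def)
    moreover have "eta_safe lam eps A X = min root (1 / (2 * lam))"
      using False unfolding eta_safe_def Let_def frob_def root_def g_def S_def by simp
    ultimately show ?thesis
      unfolding eta_star_def by (simp add: min.mono)
  qed
qed

end
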